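(* Let $z = \frac{a + b\sqrt{-D}}{c} \in G_D(\mathbb{Q})$ where $\gcd(a,b) = 1$ and $c > 1$, and let $c = p_1^{\alpha_1} \cdots p_k^{\alpha_k}$ be the prime factorization of $c$. Then each $p_i$ is an odd prime with $\left(\frac{-D}{p_i}\right)=1$ (so $\zeta_{p_i}$ is defined), and $$z \ = \ \pm \zeta_{p_1}^{\pm \alpha_1}\cdots \zeta_{p_k}^{\pm \alpha_k},$$ where the signs of the exponents may be chosen independently.
   Context: Let $D>1$ be a square-free integer with $-D \equiv 2$ or $3 \pmod 4$, and assume the class group $C(-4D)$ of primitive positive-definite binary quadratic forms of discriminant $-4D$ is a free $\mathbb{Z}_2$-module, i.e. $C(-4D)\cong(\mathbb{Z}/2\mathbb{Z})^n$ for some $n\ge 0$. Let $G_D(\mathbb{Q}) := \{a + b\sqrt{-D} \in \mathbb{Q}[\sqrt{-D}] : a^2 + Db^2 = 1\}$, a group under multiplication. For each odd prime $q$ with Legendre symbol $\left(\frac{-D}{q}\right) = 1$, there exist unique positive integers $x_0, y_0$ with $\gcd(x_0,y_0)=1$ and $q^2 = x_0^2 + D y_0^2$; define $\zeta_q := \frac{x_0 + y_0\sqrt{-D}}{q} \in G_D(\mathbb{Q})$. *)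

theory Defs
  imports "HOL-Number_Theory.Number_Theory" "HOL-Computational_Algebra.Squarefree" "HOL-Analysis.Analysis"
begin

type_synonym bqf = "int \<times> int \<times> int"

fun bqf_eval :: "bqf \<Rightarrow> int \<Rightarrow> int \<Rightarrow> int" where
  "bqf_eval (a, b, c) x y = a * x^2 + b * x * y + c * y^2"

fun bqf_disc :: "bqf \<Rightarrow> int" where
  "bqf_disc (a, b, c) = b^2 - 4 * a * c"

fun bqf_primitive :: "bqf \<Rightarrow> bool" where
  "bqf_primitive (a, b, c) = (gcd a (gcd b c) = 1)"

fun bqf_posdef :: "bqf \<Rightarrow> bool" where
  "bqf_posdef (a, b, c) = (a > 0 \<and> b^2 - 4 * a * c < 0)"

definition bqf_forms :: "int \<Rightarrow> bqf set" where
  "bqf_forms Delta = {f. bqf_disc f = Delta \<and> bqf_primitive f \<and> bqf_posdef f}"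

definition bqf_equiv :: "bqf \<Rightarrow> bqf \<Rightarrow> bool" where
  "bqf_equiv f g = (\<exists>p q r s :: int. p * s - q * r = 1 \<and>
      (\<forall>x y. bqf_eval g x y = bqf_eval f (p * x + q * y) (r * x + s * y)))"

text \<open>Dirichlet composition (Cox, Lemma 3.2): if gcd(a,a',(b+b')/2) = 1, the composite of
  (a,b,c) and (a',b',c') of discriminant Delta is (aa', B, (B^2-Delta)/(4aa')) where
  B = b mod 2a, B = b' mod 2a', B^2 = Delta mod 4aa'.\<close>
definition dirichlet_comp :: "int \<Rightarrow> bqf \<Rightarrow> bqf \<Rightarrow> bqf \<Rightarrow> bool" where
  "dirichlet_comp Delta f g F = (case f of (a, b, c) \<Rightarrow> case g of (a', b', c') \<Rightarrow>
      even (b + b') \<and> gcd a (gcd a' ((b + b') div 2)) = 1 \<and>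
      (\<exists>B. [B = b] (mod 2 * a) \<and> [B = b'] (mod 2 * a') \<and> [B^2 = Delta] (mod 4 * a * a') \<and>
           F = (a * a', B, (B^2 - Delta) div (4 * a * a'))))"

text \<open>The class group C(Delta) is an elementary abelian 2-group (i.e. isomorphic to (Z/2Z)^n;
  it is always finite abelian), i.e. the square of every class is the principal class.
  For Delta = -4D the principal form is x^2 + D y^2.\<close>
definition class_group_elem2 :: "int \<Rightarrow> bool" where
  "class_group_elem2 D = (\<forall>f \<in> bqf_forms (-4 * D). \<forall>f' F.
      bqf_equiv f f' \<and> dirichlet_comp (-4 * D) f' f' F \<longrightarrow> bqf_equiv F (1, 0, D))"

text \<open>Q(sqrt(-D)) embedded in C with sqrt(-D) = i * sqrt D.\<close>
definition G_D :: "int \<Rightarrow> complex set" where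
  "G_D D = {of_real x + of_real y * \<i> * of_real (sqrt (of_int D)) | x y.
              x \<in> \<rat> \<and> y \<in> \<rat> \<and> x^2 + of_int D * y^2 = 1}"

definition zeta :: "int \<Rightarrow> int \<Rightarrow> complex" where
  "zeta D q = (case (THE (x0, y0). x0 > 0 \<and> y0 > 0 \<and> gcd x0 y0 = 1 \<and> q^2 = x0^2 + D * y0^2)
     of (x0, y0) \<Rightarrow> (of_int x0 + of_int y0 * \<i> * of_real (sqrt (of_int D))) / of_int q)"

end

theory Submission
  imports Defs
begin

text \<open>
  Since z lies on the norm-one torus, a^2 + D b^2 = c^2 with gcd(a, b) = 1. Hence every prime
  p dividing c is odd (because -D is 2 or 3 mod 4), prime to D (because D is squarefree), and
  -D is a square modulo p^2. If t^2 = -D mod p^2, the Dirichlet square of the form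
  (p, 2t, (t^2 + D)/p) is a form with leading coefficient p^2; as the class group is
  2-torsion it is equivalent to x^2 + D y^2, which therefore represents p^2 properly,
  and the positive representation is unique. This is \<zeta>_p.

  Write \<alpha> = a + b\<surd>-D and \<pi> = x + y\<surd>-D with norm p^2. The imaginary parts of
  \<alpha> conj(\<pi>) and \<alpha> \<pi> have a product divisible by p^2 and sum 2bx, which p does
  not divide, so p^2 divides exactly one of these two products in \<int>[\<surd>-D]. Dividing
  it out writes \<alpha> = \<alpha>' \<pi>^(\<plusminus>1) with \<alpha>' primitive of norm (c/p)^2, and the
  same sign is forced for the remaining copies of p. Induction over the prime factorisation of c
  leaves a unit \<plusminus>1.
\<close>

section \<open>The ring \<int>[\<surd>-D] on pairs of integers\<close>

definition qi_mult :: "int \<Rightarrow> int \<times> int \<Rightarrow> int \<times> int \<Rightarrow> int \<times> int" where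
  "qi_mult D z w = (fst z * fst w - D * snd z * snd w, fst z * snd w + snd z * fst w)"

definition qi_cnj :: "int \<times> int \<Rightarrow> int \<times> int" where
  "qi_cnj z = (fst z, - snd z)"

definition qi_norm :: "int \<Rightarrow> int \<times> int \<Rightarrow> int" where
  "qi_norm D z = fst z ^ 2 + D * snd z ^ 2"

definition qi_smult :: "int \<Rightarrow> int \<times> int \<Rightarrow> int \<times> int" where
  "qi_smult m z = (m * fst z, m * snd z)"

definition qi_dvd :: "int \<Rightarrow> int \<times> int \<Rightarrow> bool" where
  "qi_dvd m z \<longleftrightarrow> m dvd fst z \<and> m dvd snd z"

definition qi_complex :: "int \<Rightarrow> int \<times> int \<Rightarrow> complex" where
  "qi_complex D z = of_int (fst z) + of_int (snd z) * \<i> * of_real (sqrt (of_int D))"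

lemma qi_mult_commute: "qi_mult D z w = qi_mult D w z"
  by (simp add: qi_mult_def algebra_simps)

lemma qi_mult_assoc: "qi_mult D (qi_mult D u v) w = qi_mult D u (qi_mult D v w)"
  by (simp add: qi_mult_def algebra_simps)

lemma qi_mult_one_left [simp]: "qi_mult D (1, 0) z = z"
  by (simp add: qi_mult_def)

lemma qi_mult_smult_left: "qi_mult D (qi_smult m z) w = qi_smult m (qi_mult D z w)"
  by (simp add: qi_mult_def qi_smult_def algebra_simps)

lemma qi_mult_cnj_self: "qi_mult D (qi_cnj w) w = qi_smult (qi_norm D w) (1, 0)"
  by (simp add: qi_mult_def qi_cnj_def qi_norm_def qi_smult_def power2_eq_square)

lemma qi_cnj_cnj [simp]: "qi_cnj (qi_cnj w) = w"
  by (simp add: qi_cnj_def)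

lemma fst_qi_cnj [simp]: "fst (qi_cnj w) = fst w"
  by (simp add: qi_cnj_def)

lemma qi_norm_cnj [simp]: "qi_norm D (qi_cnj w) = qi_norm D w"
  by (simp add: qi_norm_def qi_cnj_def)

lemma qi_norm_mult: "qi_norm D (qi_mult D z w) = qi_norm D z * qi_norm D w"
  by (simp add: qi_norm_def qi_mult_def power2_eq_square algebra_simps)

lemma qi_smult_cancel: "m \<noteq> 0 \<Longrightarrow> qi_smult m z = qi_smult m w \<longleftrightarrow> z = w"
  by (auto simp: qi_smult_def prod_eq_iff)

lemma qi_dvdE:
  assumes "qi_dvd m z"
  obtains z' where "z = qi_smult m z'"
proof -
  from assms obtain k l where "fst z = m * k" "snd z = m * l"
    unfolding qi_dvd_def dvd_def by blast
  then show thesis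
    using that[of "(k, l)"] by (simp add: qi_smult_def prod_eq_iff)
qed

lemma qi_dvd_mult: "qi_dvd m z \<Longrightarrow> qi_dvd m (qi_mult D z w)"
  by (simp add: qi_dvd_def qi_mult_def)

lemma qi_dvd_smult_coprime: "qi_dvd m (qi_smult n z) \<Longrightarrow> coprime m n \<Longrightarrow> qi_dvd m z"
  by (simp add: qi_dvd_def qi_smult_def coprime_dvd_mult_right_iff)

lemma qi_mult_cnj_eq_smult_norm:
  assumes "qi_mult D z (qi_cnj w) = qi_smult (qi_norm D w) z'" and "qi_norm D w \<noteq> 0"
  shows "z = qi_mult D z' w"
proof -
  have "qi_smult (qi_norm D w) z = qi_mult D z (qi_mult D (qi_cnj w) w)"
    by (simp add: qi_mult_cnj_self qi_mult_commute[of D z] qi_mult_smult_left)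
  also have "\<dots> = qi_smult (qi_norm D w) (qi_mult D z' w)"
    by (simp flip: qi_mult_assoc add: assms(1) qi_mult_smult_left)
  finally show ?thesis
    using assms(2) qi_smult_cancel by blast
qed

lemma coprime_fst_snd_qi_mult_left:
  assumes "coprime (fst (qi_mult D z w)) (snd (qi_mult D z w))"
  shows "coprime (fst z) (snd z)"
proof (rule coprimeI)
  fix d
  assume "d dvd fst z" "d dvd snd z"
  then have "qi_dvd d z"
    by (simp add: qi_dvd_def)
  then have "qi_dvd d (qi_mult D z w)"
    by (rule qi_dvd_mult)
  with assms show "is_unit d"
    unfolding qi_dvd_def using coprime_common_divisor by blast
qed

lemma qi_complex_mult:
  assumes "D \<ge> 0"
  shows "qi_complex D (qi_mult D z w) = qi_complex D z * qi_complex D w"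
proof -
  have "complex_of_real (sqrt (of_int D)) ^ 2 = of_int D"
    using assms by (simp flip: of_real_power)
  then show ?thesis
    by (simp add: qi_complex_def qi_mult_def algebra_simps power2_eq_square)
qed

lemma qi_complex_cnj_mult:
  assumes "D \<ge> 0"
  shows "qi_complex D (qi_cnj w) * qi_complex D w = of_int (qi_norm D w)"
  using qi_complex_mult[OF assms, of "qi_cnj w" w]
  by (simp add: qi_mult_cnj_self qi_smult_def qi_complex_def)

section \<open>Divisibility of conjugate products by p^2\<close>

lemma odd_prime_not_dvd_2:
  fixes p :: int
  assumes "prime p" "odd p"
  shows "\<not> p dvd 2"
proof
  assume "p dvd 2"
  then have "p \<le> 2"
    by (simp add: zdvd_imp_le)
  with assms show False
    using prime_gt_1_int[of p] by (cases "p = 2") auto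
qed

lemma prime_not_dvd_snd_of_coprime:
  fixes p :: int
  assumes "prime p" "coprime (fst z) (snd z)" "p dvd qi_norm D z"
  shows "\<not> p dvd snd z"
proof
  assume "p dvd snd z"
  then have "p dvd D * snd z ^ 2"
    by (simp add: power2_eq_square)
  then have "p dvd fst z ^ 2"
    using assms(3) by (simp add: qi_norm_def dvd_add_left_iff)
  then have "p dvd fst z"
    using assms(1) prime_dvd_power by blast
  with \<open>p dvd snd z\<close> have "is_unit p"
    using assms(2) coprime_common_divisor by blast
  with assms(1) show False
    by (simp add: not_prime_unit)
qed

lemma prime_not_dvd_fst_of_norm:
  fixes p :: int
  assumes "prime p" "\<not> p dvd D" "coprime (fst z) (snd z)" "p dvd qi_norm D z"
  shows "\<not> p dvd fst z"
proof
  assume "p dvd fst z"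
  then have "p dvd fst z ^ 2"
    by (simp add: power2_eq_square)
  then have "p dvd D * snd z ^ 2"
    using assms(4) by (simp add: qi_norm_def dvd_add_right_iff)
  then have "p dvd snd z"
    using assms(1,2) by (simp add: prime_dvd_mult_iff prime_dvd_power_iff)
  with \<open>p dvd fst z\<close> have "is_unit p"
    using assms(3) coprime_common_divisor by blast
  with assms(1) show False
    by (simp add: not_prime_unit)
qed

lemma qi_snd_mult_cnj_add_snd_mult:
  "snd (qi_mult D z (qi_cnj w)) + snd (qi_mult D z w) = 2 * (snd z * fst w)"
  by (simp add: qi_mult_def qi_cnj_def)

lemma qi_snd_mult_cnj_times_snd_mult:
  "snd (qi_mult D z (qi_cnj w)) * snd (qi_mult D z w)
     = snd z ^ 2 * qi_norm D w - snd w ^ 2 * qi_norm D z"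
  by (simp add: qi_mult_def qi_cnj_def qi_norm_def power2_eq_square algebra_simps)

lemma odd_prime_not_dvd_both_snd:
  fixes p :: int
  assumes "prime p" "odd p" "\<not> p dvd snd z" "\<not> p dvd fst w"
  shows "\<not> (p dvd snd (qi_mult D z (qi_cnj w)) \<and> p dvd snd (qi_mult D z w))"
proof
  assume "p dvd snd (qi_mult D z (qi_cnj w)) \<and> p dvd snd (qi_mult D z w)"
  then have "p dvd snd (qi_mult D z (qi_cnj w)) + snd (qi_mult D z w)"
    using dvd_add by blast
  then have "p dvd 2 * (snd z * fst w)"
    by (simp only: qi_snd_mult_cnj_add_snd_mult)
  with assms show False
    using odd_prime_not_dvd_2 by (simp add: prime_dvd_mult_iff)
qed

lemma qi_dvd_of_dvd_snd:
  assumes "m dvd snd u" "m ^ 2 dvd qi_norm D u"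
  shows "qi_dvd m u"
proof -
  have "m ^ 2 dvd qi_norm D u - D * snd u ^ 2"
    using assms by (intro dvd_diff) (simp_all add: power2_eq_square mult_dvd_mono)
  then have "m ^ 2 dvd fst u ^ 2"
    by (simp add: qi_norm_def)
  with assms(1) show ?thesis
    by (simp add: qi_dvd_def)
qed

lemma qi_dvd_mult_cnj_or_mult:
  fixes p :: int
  assumes "prime p" "odd p" "\<not> p dvd snd z" "\<not> p dvd fst w"
    and "p ^ 2 dvd qi_norm D z" "p ^ 2 dvd qi_norm D w"
  shows "qi_dvd (p ^ 2) (qi_mult D z (qi_cnj w)) \<or> qi_dvd (p ^ 2) (qi_mult D z w)"
proof -
  define u where "u = snd (qi_mult D z (qi_cnj w))"
  define v where "v = snd (qi_mult D z w)"
  have "p ^ 2 dvd u * v"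
    using assms(5,6) by (simp add: u_def v_def qi_snd_mult_cnj_times_snd_mult)
  moreover have "\<not> p dvd u \<or> \<not> p dvd v"
    using odd_prime_not_dvd_both_snd[OF assms(1-4)] by (simp add: u_def v_def)
  ultimately have "p ^ 2 dvd u \<or> p ^ 2 dvd v"
    using prime_power_dvd_multD[OF prime_imp_prime_elem[OF assms(1)], of 2]
    by (metis mult.commute zero_less_numeral)
  moreover have "(p ^ 2) ^ 2 dvd qi_norm D (qi_mult D z w')" if "qi_norm D w' = qi_norm D w" for w'
    using assms(5,6) that by (simp add: qi_norm_mult power2_eq_square mult_dvd_mono)
  ultimately show ?thesis
    unfolding u_def v_def by (metis qi_dvd_of_dvd_snd qi_norm_cnj)
qed

lemma qi_dvd_mult_cnj_cofactor:
  fixes p q :: int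
  assumes "prime p" "prime q" "p \<noteq> q"
    and "qi_mult D z (qi_cnj w) = qi_smult (p ^ 2) z'"
    and "qi_dvd (q ^ 2) (qi_mult D z (qi_cnj v))"
  shows "qi_dvd (q ^ 2) (qi_mult D z' (qi_cnj v))"
proof -
  have "qi_smult (p ^ 2) (qi_mult D z' (qi_cnj v)) = qi_mult D (qi_mult D z (qi_cnj w)) (qi_cnj v)"
    by (simp add: assms(4) qi_mult_smult_left)
  also have "\<dots> = qi_mult D (qi_mult D z (qi_cnj v)) (qi_cnj w)"
    by (simp add: qi_mult_assoc qi_mult_commute[of D "qi_cnj w"])
  finally have "qi_dvd (q ^ 2) (qi_smult (p ^ 2) (qi_mult D z' (qi_cnj v)))"
    using assms(5) qi_dvd_mult by simp
  moreover have "coprime (q ^ 2) (p ^ 2)"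
    using primes_coprime[OF assms(2,1)] assms(3) by simp
  ultimately show ?thesis
    using qi_dvd_smult_coprime by blast
qed

lemma qi_dvd_mult_cnj_cofactor_same:
  fixes p :: int
  assumes "prime p" "odd p" "\<not> p dvd snd z" "\<not> p dvd fst w"
    and "qi_dvd (p ^ 2) (qi_mult D z (qi_cnj w))" "z = qi_mult D z' w"
    and "\<not> p dvd snd z'" "p ^ 2 dvd qi_norm D z'" "p ^ 2 dvd qi_norm D w"
  shows "qi_dvd (p ^ 2) (qi_mult D z' (qi_cnj w))"
proof (rule ccontr)
  assume "\<not> ?thesis"
  then have "qi_dvd (p ^ 2) (qi_mult D z' w)"
    using qi_dvd_mult_cnj_or_mult[OF assms(1,2,7,4,8,9)] by blast
  then have "qi_dvd (p ^ 2) (qi_mult D (qi_mult D z' w) w)"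
    by (rule qi_dvd_mult)
  then have "p ^ 2 dvd snd (qi_mult D z (qi_cnj w)) \<and> p ^ 2 dvd snd (qi_mult D z w)"
    using assms(5) by (simp add: qi_dvd_def assms(6))
  then have "p dvd snd (qi_mult D z (qi_cnj w)) \<and> p dvd snd (qi_mult D z w)"
    using dvd_trans[of p "p ^ 2"] by auto
  with odd_prime_not_dvd_both_snd assms(1-4) show False
    by blast
qed

lemma qi_norm_eq_square_snd_eq_0:
  assumes "D > 1" "qi_norm D u = m ^ 2" "m dvd snd u" "m \<noteq> 0"
  shows "snd u = 0"
proof (rule ccontr)
  assume "snd u \<noteq> 0"
  then have "\<bar>m\<bar> \<le> \<bar>snd u\<bar>"
    using assms(3) by (simp add: dvd_imp_le_int)
  then have "m ^ 2 \<le> snd u ^ 2"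
    by (metis abs_le_square_iff)
  moreover have "2 * snd u ^ 2 \<le> D * snd u ^ 2"
    using assms(1) by (intro mult_right_mono) simp_all
  moreover have "m ^ 2 > 0" "fst u ^ 2 \<ge> 0"
    using assms(4) by simp_all
  ultimately show False
    using assms(2) unfolding qi_norm_def by linarith
qed

lemma qi_complex_norm_eq_1:
  assumes "D > 1" "qi_norm D z = 1"
  shows "qi_complex D z \<in> {1, -1}"
proof -
  have "snd z = 0"
    using qi_norm_eq_square_snd_eq_0[OF assms(1), of z 1] assms(2) by simp
  with assms(2) have "fst z = 1 \<or> fst z = -1"
    by (simp add: qi_norm_def power2_eq_1_iff)
  with \<open>snd z = 0\<close> show ?thesis
    by (auto simp: qi_complex_def)
qed

section \<open>Primitive representations of p^2 by x^2 + D y^2\<close>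

definition prim_rep_sq :: "int \<Rightarrow> int \<Rightarrow> int \<times> int \<Rightarrow> bool" where
  "prim_rep_sq D q w \<longleftrightarrow>
     fst w > 0 \<and> snd w > 0 \<and> coprime (fst w) (snd w) \<and> qi_norm D w = q ^ 2"

lemma zeta_eq_The: "zeta D q = qi_complex D (THE w. prim_rep_sq D q w) / of_int q"
proof -
  have "(\<lambda>(x0, y0). x0 > 0 \<and> y0 > 0 \<and> gcd x0 y0 = 1 \<and> q ^ 2 = x0 ^ 2 + D * y0 ^ 2)
      = prim_rep_sq D q"
    by (auto simp: fun_eq_iff prim_rep_sq_def qi_norm_def coprime_iff_gcd_eq_1)
  then show ?thesis
    by (simp add: zeta_def qi_complex_def split_beta)
qed

text \<open>Two such representations v, w give v conj(w) or v w of norm p^4 with imaginary part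
  divisible by p^2, which forces that imaginary part to vanish.\<close>

lemma prim_rep_sq_unique:
  fixes p :: int
  assumes "D > 1" "prime p" "odd p" "\<not> p dvd D"
    and v: "prim_rep_sq D p v" and w: "prim_rep_sq D p w"
  shows "v = w"
proof -
  have norm: "qi_norm D v = p ^ 2" "qi_norm D w = p ^ 2" and "p \<noteq> 0"
    using v w assms(2) by (auto simp: prim_rep_sq_def)
  have "\<not> p dvd snd v"
    using v norm(1) assms(2) prime_not_dvd_snd_of_coprime[of p v D]
    by (simp add: prim_rep_sq_def)
  moreover have "\<not> p dvd fst w"
    using w norm(2) assms(2,4) prime_not_dvd_fst_of_norm[of p D w]
    by (simp add: prim_rep_sq_def)
  ultimately have "qi_dvd (p ^ 2) (qi_mult D v (qi_cnj w)) \<or> qi_dvd (p ^ 2) (qi_mult D v w)"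
    using qi_dvd_mult_cnj_or_mult assms(2,3) norm by simp
  moreover have "qi_norm D (qi_mult D v u) = (p ^ 2) ^ 2" if "qi_norm D u = p ^ 2" for u
    using norm(1) that by (simp add: qi_norm_mult power2_eq_square)
  ultimately have "snd (qi_mult D v (qi_cnj w)) = 0 \<or> snd (qi_mult D v w) = 0"
    using qi_norm_eq_square_snd_eq_0[OF assms(1)] \<open>p \<noteq> 0\<close> norm(2)
    by (metis qi_dvd_def qi_norm_cnj power_not_zero)
  moreover have "snd (qi_mult D v w) > 0"
    using v w by (auto simp: prim_rep_sq_def qi_mult_def intro!: add_pos_pos)
  ultimately have cross: "fst v * snd w = snd v * fst w"
    by (simp add: qi_mult_def qi_cnj_def)
  have "fst v dvd fst w"
    using cross v by (metis dvd_triv_left coprime_dvd_mult_right_iff prim_rep_sq_def)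
  moreover have "fst w dvd fst v"
    using cross w by (metis dvd_triv_right coprime_dvd_mult_left_iff prim_rep_sq_def)
  ultimately have "fst v = fst w"
    using v w by (simp add: prim_rep_sq_def zdvd_antisym_nonneg)
  with cross v show ?thesis
    by (simp add: prim_rep_sq_def prod_eq_iff)
qed

lemma zeta_eq:
  fixes p :: int
  assumes "D > 1" "prime p" "odd p" "\<not> p dvd D" "prim_rep_sq D p w"
  shows "zeta D p = qi_complex D w / of_int p"
proof -
  have "(THE w. prim_rep_sq D p w) = w"
    using assms prim_rep_sq_unique by blast
  then show ?thesis
    by (simp add: zeta_eq_The)
qed

lemma bqf_equiv_refl: "bqf_equiv f f"
  unfolding bqf_equiv_def by (rule exI[of _ 1], rule exI[of _ 0], rule exI[of _ 0]) auto

lemma bqf_equiv_represents_first_coeff: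
  assumes "bqf_equiv (a, b, c) g"
  shows "\<exists>x y. coprime x y \<and> bqf_eval g x y = a"
proof -
  obtain P Q R S where det: "P * S - Q * R = 1"
    and ev: "\<And>x y. bqf_eval g x y = bqf_eval (a, b, c) (P * x + Q * y) (R * x + S * y)"
    using assms unfolding bqf_equiv_def by blast
  have "bqf_eval g S (- R) = a"
    using ev[of S "- R"] det by (simp add: algebra_simps)
  moreover have "coprime S (- R)"
  proof (rule coprimeI)
    fix d
    assume "d dvd S" "d dvd - R"
    then have "d dvd P * S - Q * R"
      by simp
    with det show "is_unit d"
      by simp
  qed
  ultimately show ?thesis
    by blast
qed

lemma dirichlet_comp_self:
  assumes "coprime a b" "[b ^ 2 = Delta] (mod 4 * a * a)"
  shows "dirichlet_comp Delta (a, b, c) (a, b, c) (a * a, b, (b ^ 2 - Delta) div (4 * a * a))"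
  using assms by (auto simp: dirichlet_comp_def coprime_iff_gcd_eq_1)

lemma prim_rep_sq_of_coprime:
  fixes p :: int
  assumes "prime p" "\<not> p dvd D" "coprime x y" "x ^ 2 + D * y ^ 2 = p ^ 2"
  shows "prim_rep_sq D p (\<bar>x\<bar>, \<bar>y\<bar>)"
proof -
  have "y \<noteq> 0"
  proof
    assume "y = 0"
    with assms(3) have "x ^ 2 = 1"
      by (simp add: abs_square_eq_1)
    with assms(4) \<open>y = 0\<close> have "p ^ 2 = 1"
      by simp
    with prime_gt_1_int[OF assms(1)] show False
      by (simp add: abs_square_eq_1)
  qed
  moreover have "x \<noteq> 0"
  proof
    assume "x = 0"
    with assms(3) have "y ^ 2 = 1"
      by (simp add: abs_square_eq_1)
    with assms(2,4) \<open>x = 0\<close> show False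
      by simp
  qed
  ultimately show ?thesis
    using assms(3,4) by (simp add: prim_rep_sq_def qi_norm_def)
qed

lemma prim_rep_sq_exists:
  fixes p t :: int
  assumes cg: "class_group_elem2 D" and "D > 0" "prime p" "odd p" "\<not> p dvd D"
    and "p ^ 2 dvd t ^ 2 + D"
  shows "\<exists>w. prim_rep_sq D p w"
proof -
  obtain k where k: "t ^ 2 + D = p ^ 2 * k"
    using assms(6) by (elim dvdE)
  have "\<not> p dvd t"
  proof
    assume "p dvd t"
    then have "p dvd t ^ 2" "p dvd t ^ 2 + D"
      using k by (simp_all add: power2_eq_square)
    with assms(5) show False
      using dvd_add_right_iff by blast
  qed
  then have "coprime p (2 * t)"
    using assms(3,4) odd_prime_not_dvd_2 by (simp add: prime_imp_coprime prime_dvd_mult_iff)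
  define f where "f = (p, 2 * t, p * k)"
  have "(2 * t) ^ 2 - 4 * p * (p * k) = - 4 * D"
    using k by (simp add: power2_eq_square algebra_simps)
  moreover have "gcd p (gcd (2 * t) (p * k)) = 1"
    using \<open>coprime p (2 * t)\<close> by (simp flip: gcd.assoc add: coprime_iff_gcd_eq_1)
  ultimately have f: "f \<in> bqf_forms (- 4 * D)"
    using assms(2) prime_gt_0_int[OF assms(3)] by (simp add: bqf_forms_def f_def)
  have "(2 * t) ^ 2 - (- 4 * D) = 4 * (t ^ 2 + D)"
    by (simp add: power2_eq_square)
  also have "\<dots> = 4 * p * p * k"
    unfolding k by (simp add: power2_eq_square mult_ac)
  finally have "[(2 * t) ^ 2 = - 4 * D] (mod 4 * p * p)"
    by (simp add: cong_iff_dvd_diff)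
  then have "dirichlet_comp (- 4 * D) f f (p * p, 2 * t, ((2 * t) ^ 2 - - 4 * D) div (4 * p * p))"
    unfolding f_def by (rule dirichlet_comp_self[OF \<open>coprime p (2 * t)\<close>])
  then have "bqf_equiv (p * p, 2 * t, ((2 * t) ^ 2 - - 4 * D) div (4 * p * p)) (1, 0, D)"
    using cg f bqf_equiv_refl unfolding class_group_elem2_def by blast
  then obtain x y where "coprime x y" "bqf_eval (1, 0, D) x y = p * p"
    using bqf_equiv_represents_first_coeff by blast
  then have "coprime x y" "x ^ 2 + D * y ^ 2 = p ^ 2"
    by (simp_all add: power2_eq_square)
  then show ?thesis
    using prim_rep_sq_of_coprime assms(3,5) by blast
qed

section \<open>Prime divisors of the norm of a primitive element\<close>

lemma four_dvd_norm_imp_even: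
  fixes a b D :: int
  assumes "(- D) mod 4 \<in> {2, 3}" "4 dvd a ^ 2 + D * b ^ 2"
  shows "even a \<and> even b"
proof -
  define r s d where "r = a mod 4" and "s = b mod 4" and "d = D mod 4"
  have "(- D) mod 4 = 2 \<or> (- D) mod 4 = 3"
    using assms(1) by simp
  then have "d = 1 \<or> d = 2"
    unfolding d_def by presburger
  moreover have "r = 0 \<or> r = 1 \<or> r = 2 \<or> r = 3" "s = 0 \<or> s = 1 \<or> s = 2 \<or> s = 3"
    unfolding r_def s_def by presburger+
  moreover have "[a ^ 2 + D * b ^ 2 = r ^ 2 + d * s ^ 2] (mod 4)"
    unfolding r_def s_def d_def by (intro cong_add cong_mult cong_pow) (simp_all add: cong_def)
  then have "4 dvd r ^ 2 + d * s ^ 2"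
    using assms(2) cong_dvd_iff by blast
  moreover have "even a \<longleftrightarrow> even r" "even b \<longleftrightarrow> even s"
    unfolding r_def s_def by presburger+
  ultimately show ?thesis
    by (elim disjE) simp_all
qed

lemma prime_sq_dvd_norm_odd:
  fixes p :: int
  assumes "(- D) mod 4 \<in> {2, 3}" "coprime (fst z) (snd z)" "prime p" "p ^ 2 dvd qi_norm D z"
  shows "odd p"
proof
  assume "even p"
  then have "p = 2"
    using assms(3) primes_dvd_imp_eq two_is_prime by blast
  then have "even (fst z) \<and> even (snd z)"
    using assms(1,4) four_dvd_norm_imp_even by (simp add: qi_norm_def)
  then have "is_unit (2 :: int)"
    using assms(2) coprime_common_divisor by blast
  then show False
    by simp
qed

lemma prime_sq_dvd_norm_not_dvd_snd:
  fixes p :: int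
  assumes "coprime (fst z) (snd z)" "prime p" "p ^ 2 dvd qi_norm D z"
  shows "\<not> p dvd snd z"
proof -
  have "p dvd qi_norm D z"
    by (rule dvd_trans[OF _ assms(3)]) simp
  with assms(1,2) show ?thesis
    using prime_not_dvd_snd_of_coprime by blast
qed

lemma prime_sq_dvd_norm_not_dvd:
  fixes p :: int
  assumes "squarefree D" "coprime (fst z) (snd z)" "prime p" "p ^ 2 dvd qi_norm D z"
  shows "\<not> p dvd D"
proof
  assume "p dvd D"
  then have "p dvd D * snd z ^ 2"
    by simp
  moreover have "p dvd qi_norm D z"
    by (rule dvd_trans[OF _ assms(4)]) simp
  ultimately have "p dvd fst z ^ 2"
    unfolding qi_norm_def using dvd_add_left_iff by blast
  then have "p ^ 2 dvd fst z ^ 2"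
    using assms(3) prime_dvd_power by (metis dvd_power_same)
  then have "p ^ 2 dvd D * snd z ^ 2"
    using assms(4) by (simp add: qi_norm_def dvd_add_right_iff)
  moreover have "coprime (p ^ 2) (snd z ^ 2)"
    using assms(2-4) prime_sq_dvd_norm_not_dvd_snd by (simp add: prime_imp_coprime)
  ultimately have "p ^ 2 dvd D"
    using coprime_dvd_mult_left_iff by blast
  with assms(1,3) show False
    using squarefreeD not_prime_unit by metis
qed

text \<open>If b b' = 1 mod p^2, then t = a b' is a square root of -D modulo p^2.\<close>

lemma prime_sq_dvd_norm_imp_sqrt:
  fixes p :: int
  assumes "coprime (fst z) (snd z)" "prime p" "p ^ 2 dvd qi_norm D z"
  shows "\<exists>t. p ^ 2 dvd t ^ 2 + D"
proof -
  have "coprime (snd z) (p ^ 2)"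
    using assms prime_sq_dvd_norm_not_dvd_snd by (simp add: prime_imp_coprime coprime_commute)
  then obtain b' where "[snd z * b' = 1] (mod p ^ 2)"
    using cong_solve_coprime_int by blast
  then have "p ^ 2 dvd snd z * b' - 1"
    by (simp add: cong_iff_dvd_diff)
  define t where "t = fst z * b'"
  have "snd z ^ 2 * (t ^ 2 + D) = qi_norm D z + fst z ^ 2 * ((snd z * b' - 1) * (snd z * b' + 1))"
    by (simp add: t_def qi_norm_def algebra_simps power2_eq_square)
  then have "p ^ 2 dvd snd z ^ 2 * (t ^ 2 + D)"
    using assms(3) \<open>p ^ 2 dvd snd z * b' - 1\<close> by simp
  then have "p ^ 2 dvd t ^ 2 + D"
    using \<open>coprime (snd z) (p ^ 2)\<close> by (simp add: coprime_dvd_mult_right_iff coprime_commute)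
  then show ?thesis ..
qed

lemma Legendre_neg_eq_1:
  fixes p D t :: int
  assumes "\<not> p dvd D" "p dvd t ^ 2 + D"
  shows "Legendre (- D) p = 1"
proof -
  have "[t ^ 2 = - D] (mod p)"
    using assms(2) by (simp add: cong_iff_dvd_diff)
  then have "QuadRes p (- D)"
    unfolding QuadRes_def by blast
  moreover have "\<not> [- D = 0] (mod p)"
    using assms(1) by (simp add: cong_iff_dvd_diff)
  ultimately show ?thesis
    by (simp add: Legendre_def)
qed

lemma prime_sq_dvd_norm_Legendre:
  fixes p :: int
  assumes "squarefree D" "coprime (fst z) (snd z)" "prime p" "p ^ 2 dvd qi_norm D z"
  shows "Legendre (- D) p = 1"
proof -
  obtain t where "p ^ 2 dvd t ^ 2 + D"
    using prime_sq_dvd_norm_imp_sqrt assms(2-4) by blast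
  then have "p dvd t ^ 2 + D"
    by (rule dvd_trans[rotated]) simp
  then show ?thesis
    using Legendre_neg_eq_1 prime_sq_dvd_norm_not_dvd[OF assms] by blast
qed

lemma exists_qi_zeta_power_dvd_mult_cnj:
  fixes p :: int
  assumes "D > 1" "squarefree D" "(- D) mod 4 \<in> {2, 3}" "class_group_elem2 D"
    and "coprime (fst z) (snd z)" "prime p" "p ^ 2 dvd qi_norm D z"
  shows "\<exists>w e. e \<in> {1, -1} \<and> qi_norm D w = p ^ 2 \<and> \<not> p dvd fst w \<and>
           qi_dvd (p ^ 2) (qi_mult D z (qi_cnj w)) \<and> qi_complex D w / of_int p = zeta D p powi e"
proof -
  have "odd p" "\<not> p dvd D"
    using prime_sq_dvd_norm_odd prime_sq_dvd_norm_not_dvd assms by blast+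
  moreover obtain t where "p ^ 2 dvd t ^ 2 + D"
    using prime_sq_dvd_norm_imp_sqrt assms(5-7) by blast
  ultimately obtain w where w: "prim_rep_sq D p w"
    using prim_rep_sq_exists assms(1,4,6) by (meson zero_less_one less_trans)
  then have zeta: "zeta D p = qi_complex D w / of_int p"
    using zeta_eq assms(1,6) \<open>odd p\<close> \<open>\<not> p dvd D\<close> by blast
  have norm: "qi_norm D w = p ^ 2"
    using w by (simp add: prim_rep_sq_def)
  have "\<not> p dvd fst w"
    using prime_not_dvd_fst_of_norm[OF assms(6) \<open>\<not> p dvd D\<close>] w by (simp add: prim_rep_sq_def)
  moreover have "\<not> p dvd snd z"
    using prime_sq_dvd_norm_not_dvd_snd assms(5-7) by blast
  ultimately have "qi_dvd (p ^ 2) (qi_mult D z (qi_cnj w)) \<or> qi_dvd (p ^ 2) (qi_mult D z w)"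
    using qi_dvd_mult_cnj_or_mult assms(6,7) \<open>odd p\<close> norm by simp
  then show ?thesis
  proof
    assume "qi_dvd (p ^ 2) (qi_mult D z (qi_cnj w))"
    then show ?thesis
      using norm \<open>\<not> p dvd fst w\<close> zeta by (intro exI[of _ w] exI[of _ 1]) simp
  next
    assume dvd: "qi_dvd (p ^ 2) (qi_mult D z w)"
    have prod: "qi_complex D (qi_cnj w) * qi_complex D w = of_int p * of_int p"
      using qi_complex_cnj_mult[of D w] assms(1) norm by (simp add: power2_eq_square)
    moreover have "of_int p \<noteq> (0 :: complex)"
      using prime_gt_0_int[OF assms(6)] by simp
    ultimately have "qi_complex D w \<noteq> 0"
      by auto
    with prod \<open>of_int p \<noteq> (0 :: complex)\<close>
    have "qi_complex D (qi_cnj w) / of_int p = zeta D p powi (- 1)"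
      by (simp add: zeta power_int_minus field_simps)
    then show ?thesis
      using dvd norm \<open>\<not> p dvd fst w\<close> by (intro exI[of _ "qi_cnj w"] exI[of _ "- 1"]) simp
  qed
qed

lemma exists_qi_zeta_powers:
  fixes c :: int
  assumes "D > 1" "squarefree D" "(- D) mod 4 \<in> {2, 3}" "class_group_elem2 D"
    and "coprime (fst z) (snd z)" "qi_norm D z = c ^ 2"
  obtains e w where "\<And>p. e p \<in> {1, -1}"
    and "\<And>p. p \<in> prime_factors c \<Longrightarrow> qi_norm D (w p) = p ^ 2 \<and> \<not> p dvd fst (w p) \<and>
           qi_dvd (p ^ 2) (qi_mult D z (qi_cnj (w p))) \<and>
           qi_complex D (w p) / of_int p = zeta D p powi e p"
proof -
  define R where "R p w e \<longleftrightarrow> e \<in> {1, -1} \<and> (p \<in> prime_factors c \<longrightarrow>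
      qi_norm D w = p ^ 2 \<and> \<not> p dvd fst w \<and> qi_dvd (p ^ 2) (qi_mult D z (qi_cnj w)) \<and>
      qi_complex D w / of_int p = zeta D p powi e)" for p w e
  have "p ^ 2 dvd qi_norm D z" if "p \<in> prime_factors c" for p
    using that assms(6) by (simp add: in_prime_factors_iff)
  then have "\<exists>w e. R p w e" for p
    using exists_qi_zeta_power_dvd_mult_cnj[OF assms(1-5), of p]
    unfolding R_def by (cases "p \<in> prime_factors c") auto
  then obtain w e where "\<And>p. R p (w p) (e p)"
    by metis
  then show thesis
    using that unfolding R_def by blast
qed

section \<open>Factorisation\<close>

lemma qi_divide_out_prime:
  fixes p m :: int
  assumes "prime p" "odd p" "qi_norm D w = p ^ 2" "\<not> p dvd fst w"
    and "qi_dvd (p ^ 2) (qi_mult D z (qi_cnj w))"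
    and "coprime (fst z) (snd z)" "qi_norm D z = (p * m) ^ 2"
  obtains z' where "qi_mult D z (qi_cnj w) = qi_smult (p ^ 2) z'" "z = qi_mult D z' w"
    and "coprime (fst z') (snd z')" "qi_norm D z' = m ^ 2"
    and "p dvd m \<Longrightarrow> qi_dvd (p ^ 2) (qi_mult D z' (qi_cnj w))"
proof -
  obtain z' where z': "qi_mult D z (qi_cnj w) = qi_smult (p ^ 2) z'"
    using assms(5) qi_dvdE by blast
  have "p ^ 2 \<noteq> 0"
    using assms(1) by simp
  then have z: "z = qi_mult D z' w"
    using qi_mult_cnj_eq_smult_norm z' assms(3) by metis
  have coprime': "coprime (fst z') (snd z')"
    using assms(6) coprime_fst_snd_qi_mult_left z by metis
  have "p ^ 2 * qi_norm D z' = p ^ 2 * m ^ 2"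
    using assms(3,7) by (simp add: z qi_norm_mult power_mult_distrib mult.commute)
  then have norm': "qi_norm D z' = m ^ 2"
    using \<open>p ^ 2 \<noteq> 0\<close> by simp
  have "qi_dvd (p ^ 2) (qi_mult D z' (qi_cnj w))" if "p dvd m"
  proof -
    have "p ^ 2 dvd qi_norm D z'" "p ^ 2 dvd qi_norm D z"
      using that assms(7) by (simp_all add: norm')
    then show ?thesis
      using qi_dvd_mult_cnj_cofactor_same[OF assms(1,2) _ assms(4,5) z] assms(3,6) coprime'
        prime_sq_dvd_norm_not_dvd_snd[OF _ assms(1)] by simp
  qed
  with z' z coprime' norm' show thesis
    using that by blast
qed

lemma qi_factorization:
  fixes P :: "int multiset" and w :: "int \<Rightarrow> int \<times> int"
  assumes "D > 1"
    and "\<And>p. p \<in># P \<Longrightarrow> prime p \<and> odd p \<and> qi_norm D (w p) = p ^ 2 \<and> \<not> p dvd fst (w p)"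
    and "\<And>p. p \<in># P \<Longrightarrow> qi_dvd (p ^ 2) (qi_mult D z (qi_cnj (w p)))"
    and "coprime (fst z) (snd z)" "qi_norm D z = (\<Prod>\<^sub># P) ^ 2"
  shows "\<exists>s \<in> {1, -1}.
           qi_complex D z / of_int (\<Prod>\<^sub># P) = s * (\<Prod>p\<in>#P. qi_complex D (w p) / of_int p)"
  using assms(2-)
proof (induction P arbitrary: z)
  case empty
  then show ?case
    using qi_complex_norm_eq_1[OF assms(1)] by auto
next
  case (add p P)
  have p: "prime p" "odd p" "qi_norm D (w p) = p ^ 2" "\<not> p dvd fst (w p)"
    using add.prems(1) by auto
  obtain z' where z': "qi_mult D z (qi_cnj (w p)) = qi_smult (p ^ 2) z'"
    and z: "z = qi_mult D z' (w p)" and coprime': "coprime (fst z') (snd z')"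
    and norm': "qi_norm D z' = (\<Prod>\<^sub># P) ^ 2"
    and same: "p dvd \<Prod>\<^sub># P \<Longrightarrow> qi_dvd (p ^ 2) (qi_mult D z' (qi_cnj (w p)))"
    using qi_divide_out_prime[OF p, of z "\<Prod>\<^sub># P"] add.prems(2-4) by auto
  have dvd': "qi_dvd (q ^ 2) (qi_mult D z' (qi_cnj (w q)))" if "q \<in># P" for q
  proof (cases "q = p")
    case True
    then show ?thesis
      using same that by (simp add: dvd_prod_mset)
  next
    case False
    then show ?thesis
      using qi_dvd_mult_cnj_cofactor[OF p(1) _ _ z'] add.prems(1,2) that by auto
  qed
  have "\<exists>s \<in> {1, -1}.
          qi_complex D z' / of_int (\<Prod>\<^sub># P) = s * (\<Prod>q\<in>#P. qi_complex D (w q) / of_int q)"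
    by (rule add.IH) (use add.prems(1) dvd' coprime' norm' in auto)
  then obtain s where "s \<in> {1, -1}"
    and s: "qi_complex D z' / of_int (\<Prod>\<^sub># P) = s * (\<Prod>q\<in>#P. qi_complex D (w q) / of_int q)"
    by blast
  have "qi_complex D z / of_int (\<Prod>\<^sub># (add_mset p P))
      = qi_complex D z' / of_int (\<Prod>\<^sub># P) * (qi_complex D (w p) / of_int p)"
    using assms(1) by (simp add: z qi_complex_mult)
  with \<open>s \<in> {1, -1}\<close> show ?case
    by (auto simp: s mult_ac)
qed

lemma prod_mset_prime_factorization_powi:
  fixes f :: "int \<Rightarrow> 'a :: field"
  shows "(\<Prod>p\<in>#prime_factorization c. f p powi e p)
           = (\<Prod>p \<in> prime_factors c. f p powi (e p * int (multiplicity p c)))"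
proof -
  have "(\<Prod>p\<in>#prime_factorization c. f p powi e p)
      = (\<Prod>p \<in> prime_factors c. (f p powi e p) ^ count (prime_factorization c) p)"
    by (rule image_prod_mset_multiplicity)
  also have "\<dots> = (\<Prod>p \<in> prime_factors c. f p powi (e p * int (multiplicity p c)))"
    by (intro prod.cong)
      (auto simp: power_int_power' count_prime_factorization_prime[OF in_prime_factors_imp_prime])
  finally show ?thesis .
qed

lemma qi_norm_of_G_D:
  assumes "D > 0" "c \<noteq> 0" "qi_complex D z / of_int c \<in> G_D D"
  shows "qi_norm D z = c ^ 2"
proof -
  obtain x y :: real
    where "qi_complex D z / of_int c = of_real x + of_real y * \<i> * of_real (sqrt (of_int D))"
      and norm: "x ^ 2 + of_int D * y ^ 2 = 1"
    using assms(3) unfolding G_D_def by blast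
  then have eq: "qi_complex D z = of_int c * (of_real x + of_real y * \<i> * of_real (sqrt (of_int D)))"
    using assms(2) by (simp add: field_simps)
  have "sqrt (real_of_int D) > 0"
    using assms(1) by simp
  then have "of_int (fst z) = of_int c * x" "of_int (snd z) = of_int c * y"
    using arg_cong[OF eq, of Re] arg_cong[OF eq, of Im] by (simp_all add: qi_complex_def)
  then have "real_of_int (qi_norm D z) = real_of_int (c ^ 2) * (x ^ 2 + of_int D * y ^ 2)"
    by (simp add: qi_norm_def power2_eq_square algebra_simps)
  then show ?thesis
    using norm by simp
qed

theorem theorem3p6:
  fixes D a b c :: int
  assumes "D > 1" and "squarefree D" and "(- D) mod 4 \<in> {2, 3}"
    and "class_group_elem2 D"
    and "gcd a b = 1" and "c > 1"
    and "(of_int a + of_int b * \<i> * of_real (sqrt (of_int D))) / of_int c \<in> G_D D"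
  shows "(\<forall>p \<in> prime_factors c. odd p \<and> Legendre (- D) p = 1) \<and>
         (\<exists>s \<in> {1, -1 :: complex}. \<exists>e :: int \<Rightarrow> int. (\<forall>p. e p \<in> {1, -1}) \<and>
            (of_int a + of_int b * \<i> * of_real (sqrt (of_int D))) / of_int c
              = s * (\<Prod>p \<in> prime_factors c. zeta D p powi (e p * int (multiplicity p c))))"
proof -
  have z: "of_int a + of_int b * \<i> * of_real (sqrt (of_int D)) = qi_complex D (a, b)"
    by (simp add: qi_complex_def)
  have coprime: "coprime (fst (a, b)) (snd (a, b))"
    using assms(5) by (simp add: coprime_iff_gcd_eq_1)
  have norm: "qi_norm D (a, b) = c ^ 2"
    using qi_norm_of_G_D assms(1,6,7) by (simp add: z)
  have pf: "prime p" "p ^ 2 dvd qi_norm D (a, b)" if "p \<in> prime_factors c" for p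
    using that by (auto simp: norm in_prime_factors_iff)
  have odd_Legendre: "odd p \<and> Legendre (- D) p = 1" if "p \<in> prime_factors c" for p
    by (intro conjI prime_sq_dvd_norm_odd[OF assms(3) coprime]
        prime_sq_dvd_norm_Legendre[OF assms(2) coprime] pf[OF that])
  obtain e w where e: "\<And>p. e p \<in> {1, -1}" and we: "\<And>p. p \<in> prime_factors c \<Longrightarrow>
      qi_norm D (w p) = p ^ 2 \<and> \<not> p dvd fst (w p) \<and> qi_dvd (p ^ 2) (qi_mult D (a, b) (qi_cnj (w p)))
      \<and> qi_complex D (w p) / of_int p = zeta D p powi e p"
    using exists_qi_zeta_powers[OF assms(1-4) coprime norm] by auto
  have norm': "qi_norm D (a, b) = (\<Prod>\<^sub># (prime_factorization c)) ^ 2"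
    using norm assms(6) by (simp add: prod_mset_prime_factorization_int)
  have "\<exists>s \<in> {1, -1}. qi_complex D (a, b) / of_int (\<Prod>\<^sub># (prime_factorization c))
          = s * (\<Prod>p\<in>#prime_factorization c. qi_complex D (w p) / of_int p)"
    by (rule qi_factorization[OF assms(1) _ _ coprime norm']) (use we odd_Legendre in auto)
  moreover have "(\<Prod>p\<in>#prime_factorization c. qi_complex D (w p) / of_int p)
      = (\<Prod>p\<in>#prime_factorization c. zeta D p powi e p)"
    using we by (intro arg_cong[of _ _ prod_mset] image_mset_cong) auto
  ultimately show ?thesis
    using odd_Legendre e assms(6)
    by (auto simp: z prod_mset_prime_factorization_powi prod_mset_prime_factorization_int)
qed

end
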